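(* Let $(\mathbf k,\log)$ be an ordered field with surjective logarithm and $(\mathbf k((G)),l)$ a series field with prelogarithmic section. Let $H\ne\{1\}$ be a subgroup of $G$ satisfying the growth axiom. Define $H^{-1}=\{1\}$, $H^0=H$ and inductively $H^{n+1}=H^n\cdot\mathrm{Exp}\,\mathbf k(((H^n)^{>H^{n-1}}))\subseteq G^{\#(n+1)}$. Then for every $n\ge0$: $H^n$ is a proper convex subgroup of $H^{n+1}$, $H^{n+1}$ is the anti-lexicographic product of $H^n$ and $\mathrm{Exp}\,\mathbf k(((H^n)^{>H^{n-1}}))$, and $\mathrm{Log}(h)<|f|$ for all $h\in H^{n+1}$ and all nonzero $f\in\mathbf k(((H^{n+1})^{>H^n}))$.
   Context: Let $\mathbf k$ be an ordered field and $(G,\cdot,<)$ a totally ordered abelian group (written multiplicatively). $\mathbf k((G))$ denotes the field of generalized power series $\alpha=\sum_{g\in G}\alpha(g)\,g$ ($\alpha(g)\in\mathbf k$) with anti-well-ordered support, usual operations, canonical valuation $v(\alpha)=\max\operatorname{supp}\alpha$ and ordering $\alpha>0$ iff $\alpha(v(\alpha))>0$; $\mathbf k$, $G$ are identified with subsets of $\mathbf k((G))$. For $S\subseteq G$, $\mathbf k((S))=\{\alpha:\operatorname{supp}\alpha\subseteq S\}$. For a subgroup $H$ and $A\subseteq G$, $H^{>A}=\{h\in H:h>a\ \forall a\in A\}$, $H^{>1}=\{h\in H:h>1\}$. Every $\alpha>0$ is uniquely $\alpha=g\,a(1+\varepsilon)$ with $g=v(\alpha)$, $a\in\mathbf k^{>0}$,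 $\varepsilon\in\mathbf k((G^{<1}))$. A prelogarithmic section is an order-preserving group embedding $l:(G,\cdot)\to(\mathbf k((G^{>1})),+)$; $\log:(\mathbf k^{>0},\cdot)\to(\mathbf k,+)$ is an order-preserving group isomorphism. The prelogarithm of $l$ is $L(g\,a(1+\varepsilon))=l(g)+\log a+\sum_{i\ge1}(-1)^{i-1}\varepsilon^i/i$. Exponential extension: $G^\#$ is the ordered abelian group of formal symbols $e(\alpha)$, $\alpha\in\mathbf k((G^{>1}))$, with $e(\alpha)e(\beta)=e(\alpha+\beta)$, $e(\alpha)<e(\beta)\iff\alpha<\beta$, and $e(l(g))$ identified with $g\in G$; $l^\#(e(\alpha))=\alpha$ is a prelogarithmic section of $\mathbf k((G^\#))$ extending $l$. Iterating: $G^{\#n}$, $l^{\#n}$, prelogarithms $L^{\#n}$. The EL-series field is $\mathbf k((G))^{EL}=\bigcup_n\mathbf k((G^{\#n}))$ with $\mathrm{Log}=\bigcup_nL^{\#n}$, an order preserving isomorphism from the positive elements onto $(\mathbf k((G))^{EL},+)$; $\mathrm{Exp}=\mathrm{Log}^{-1}$. A subgroup $H\ne\{1\}$ of $G$ satisfies the growth axiom if $\mathrm{Log}(h)<|f|$ for all $h\in H$ and all nonzero $f\in\mathbf k((H^{>1}))$. "Anti-lexicographic product" of subgroups $A,B$: the group is $A\cdot B$, the product is direct and $A$ is convex in it. *)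

theory Defs
  imports Main
begin

text \<open>
  The ordered abelian group is written additively: an ambient
  type 'g :: linordered_ab_group_add, with identity 0 (the paper's 1).
  A generalized power series with coefficients in 'k and exponents in 'g is a
  function 'g => 'k; k((S)) is the set of such functions with anti-well-ordered
  support contained in S.
\<close>

definition supp :: "('g \<Rightarrow> 'k::zero) \<Rightarrow> 'g set" where
  "supp f = {g. f g \<noteq> 0}"

definition anti_wo :: "'g::linorder set \<Rightarrow> bool" where
  "anti_wo S \<longleftrightarrow> wf {(x, y). x \<in> S \<and> y \<in> S \<and> y < x}"

definition series_on :: "'g::linorder set \<Rightarrow> ('g \<Rightarrow> 'k::zero) set" where
  "series_on S = {f. supp f \<subseteq> S \<and> anti_wo (supp f)}"

definition sval :: "('g::linorder \<Rightarrow> 'k::zero) \<Rightarrow> 'g" where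
  "sval f = (GREATEST g. g \<in> supp f)"

definition spos :: "('g::linorder \<Rightarrow> 'k::linordered_field) \<Rightarrow> bool" where
  "spos f \<longleftrightarrow> supp f \<noteq> {} \<and> f (sval f) > 0"

definition sless :: "('g::linorder \<Rightarrow> 'k::linordered_field) \<Rightarrow> ('g \<Rightarrow> 'k) \<Rightarrow> bool" where
  "sless f h \<longleftrightarrow> spos (\<lambda>x. h x - f x)"

definition sabs :: "('g::linorder \<Rightarrow> 'k::linordered_field) \<Rightarrow> 'g \<Rightarrow> 'k" where
  "sabs f = (if spos f then f else (\<lambda>x. - f x))"

definition add_subgroup :: "'g::ab_group_add set \<Rightarrow> bool" where
  "add_subgroup A \<longleftrightarrow> 0 \<in> A \<and> (\<forall>a\<in>A. \<forall>b\<in>A. a + b \<in> A) \<and> (\<forall>a\<in>A. - a \<in> A)"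

definition set_plus :: "'g::plus set \<Rightarrow> 'g set \<Rightarrow> 'g set" where
  "set_plus A B = {a + b | a b. a \<in> A \<and> b \<in> B}"

definition convex_in :: "'g::order set \<Rightarrow> 'g set \<Rightarrow> bool" where
  "convex_in A B \<longleftrightarrow> (\<forall>a\<in>A. \<forall>b\<in>A. \<forall>c\<in>B. a \<le> c \<and> c \<le> b \<longrightarrow> c \<in> A)"

definition antilex_product :: "'g::linordered_ab_group_add set \<Rightarrow> 'g set \<Rightarrow> 'g set \<Rightarrow> bool" where
  "antilex_product C A B \<longleftrightarrow> add_subgroup A \<and> add_subgroup B \<and> C = set_plus A B
     \<and> A \<inter> B = {0} \<and> convex_in A C"

definition is_log :: "('k::linordered_field \<Rightarrow> 'k) \<Rightarrow> bool" where
  "is_log lg \<longleftrightarrow> bij_betw lg {0<..} UNIV \<and> strict_mono_on {0<..} lg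
     \<and> (\<forall>a>0. \<forall>b>0. lg (a * b) = lg a + lg b)"

definition is_prelog_section :: "'g::linordered_ab_group_add set \<Rightarrow> ('g \<Rightarrow> 'g \<Rightarrow> 'k::linordered_field) \<Rightarrow> bool" where
  "is_prelog_section A l \<longleftrightarrow>
     (\<forall>g\<in>A. l g \<in> series_on {h\<in>A. 0 < h}) \<and>
     (\<forall>g\<in>A. \<forall>h\<in>A. l (g + h) = (\<lambda>x. l g x + l h x)) \<and>
     (\<forall>g\<in>A. \<forall>h\<in>A. g < h \<longrightarrow> sless (l g) (l h))"

text \<open>
  The tower of iterated exponential extensions G = G^{#0} <= G^{#1} <= ...,
  realised inside the ambient group 'g, together with Ls = the union of the
  sections l^{#n}. The defining property of G^{#(n+1)}: l^{#(n+1)} is an order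
  preserving group isomorphism of G^{#(n+1)} onto k((G^{#n >1})) which extends
  l^{#n} (with e(l^{#n}(g)) identified with g).
\<close>
definition is_exp_tower ::
  "'g::linordered_ab_group_add set \<Rightarrow> ('g \<Rightarrow> 'g \<Rightarrow> 'k::linordered_field)
    \<Rightarrow> (nat \<Rightarrow> 'g set) \<Rightarrow> ('g \<Rightarrow> 'g \<Rightarrow> 'k) \<Rightarrow> bool" where
  "is_exp_tower G l Gs Ls \<longleftrightarrow>
     Gs 0 = G \<and> (\<forall>g\<in>G. Ls g = l g) \<and>
     (\<forall>n. add_subgroup (Gs n) \<and> Gs n \<subseteq> Gs (Suc n)) \<and>
     (\<forall>n. bij_betw Ls (Gs (Suc n)) (series_on {h\<in>Gs n. 0 < h})) \<and>
     (\<forall>n. \<forall>g\<in>Gs (Suc n). \<forall>h\<in>Gs (Suc n). Ls (g + h) = (\<lambda>x. Ls g x + Ls h x)) \<and>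
     (\<forall>n. \<forall>g\<in>Gs (Suc n). \<forall>h\<in>Gs (Suc n). g < h \<longleftrightarrow> sless (Ls g) (Ls h))"

text \<open>
  Log of a monomial h (an element of some G^{#n}): h = h * 1 * (1 + 0), so by the
  definition of the prelogarithm, Log(h) = l^{#n}(h) + log 1 + 0 = l^{#n}(h).
\<close>
definition Log_mono :: "('g \<Rightarrow> 'g \<Rightarrow> 'k) \<Rightarrow> 'g \<Rightarrow> 'g \<Rightarrow> 'k" where
  "Log_mono Ls h = Ls h"

text \<open>
  Exp of a set F of purely infinite series in k((G^{#n >1})): Exp(f) = e(f) is the
  unique element of G^{#(n+1)} whose section is f.
\<close>
definition Exp_set :: "(nat \<Rightarrow> 'g set) \<Rightarrow> ('g \<Rightarrow> 'g \<Rightarrow> 'k) \<Rightarrow> nat \<Rightarrow> ('g \<Rightarrow> 'k) set \<Rightarrow> 'g set" where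
  "Exp_set Gs Ls n F = {g \<in> Gs (Suc n). Ls g \<in> F}"

definition above :: "'g::order set \<Rightarrow> 'g set \<Rightarrow> 'g set" where
  "above A B = {h \<in> A. \<forall>b\<in>B. b < h}"

text \<open>Htow n = H^{n-1}: Htow 0 = H^{-1} = {0}, Htow 1 = H^0 = H,
  H^{n+1} = H^n + Exp k(((H^n)^{> H^{n-1}})) inside G^{#(n+1)}.\<close>
fun Htow :: "(nat \<Rightarrow> 'g::linordered_ab_group_add set) \<Rightarrow> ('g \<Rightarrow> 'g \<Rightarrow> 'k::linordered_field)
              \<Rightarrow> 'g set \<Rightarrow> nat \<Rightarrow> 'g set" where
  "Htow Gs Ls H 0 = {0}"
| "Htow Gs Ls H (Suc 0) = H"
| "Htow Gs Ls H (Suc (Suc n)) =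
     set_plus (Htow Gs Ls H (Suc n))
       (Exp_set Gs Ls n (series_on (above (Htow Gs Ls H (Suc n)) (Htow Gs Ls H n))))"

definition growth_axiom :: "('g \<Rightarrow> 'g \<Rightarrow> 'k::linordered_field) \<Rightarrow> 'g::linordered_ab_group_add set \<Rightarrow> bool" where
  "growth_axiom Ls H \<longleftrightarrow> (\<forall>h\<in>H. \<forall>f\<in>series_on {x\<in>H. 0 < x}.
      f \<noteq> (\<lambda>_. 0) \<longrightarrow> sless (Log_mono Ls h) (sabs f))"

end

theory Submission
  imports Defs
begin

text \<open>
  A stage is a subgroup B of some level Gs n of
  the exponential tower together with a set A (containing 0) such that B^{>A} is
  nonempty and B grows over A: Log h < |f| for h in B and nonzero f in k((B^{>A})).
  For such a stage, with E = Exp k((B^{>A})), we show: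
  (1) every nonzero e in E dominates B, i.e. B < |e|;  this yields B \<inter> E = {0},
      convexity of B in B + E and properness of B in B + E;
  (2) growth bounds the supports of Log h (h in B) by B^{>A}, whence B + E grows over B.
  So (B + E, B) is again a stage.  The growth axiom makes (H, {0}) a stage, and the
  theorem follows by induction on n.
\<close>

lemma anti_wo_iff_has_max:
  "anti_wo (S::'g::linorder set) \<longleftrightarrow> (\<forall>T. T \<subseteq> S \<longrightarrow> T \<noteq> {} \<longrightarrow> (\<exists>m\<in>T. \<forall>y\<in>T. y \<le> m))"
proof
  assume wf: "anti_wo S"
  show "\<forall>T. T \<subseteq> S \<longrightarrow> T \<noteq> {} \<longrightarrow> (\<exists>m\<in>T. \<forall>y\<in>T. y \<le> m)"
  proof (intro allI impI)
    fix T assume T: "T \<subseteq> S" "T \<noteq> {}"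
    then obtain x where "x \<in> T" by blast
    with wf obtain m where "m \<in> T" "\<forall>y. (y, m) \<in> {(x, y). x \<in> S \<and> y \<in> S \<and> y < x} \<longrightarrow> y \<notin> T"
      unfolding anti_wo_def wf_eq_minimal by blast
    with T have "\<forall>y\<in>T. y \<le> m" by (auto intro: leI)
    with \<open>m \<in> T\<close> show "\<exists>m\<in>T. \<forall>y\<in>T. y \<le> m" ..
  qed
next
  assume max: "\<forall>T. T \<subseteq> S \<longrightarrow> T \<noteq> {} \<longrightarrow> (\<exists>m\<in>T. \<forall>y\<in>T. y \<le> m)"
  show "anti_wo S"
    unfolding anti_wo_def
  proof (rule wfI_min)
    fix x :: 'g and Q assume "x \<in> Q"
    show "\<exists>z\<in>Q. \<forall>y. (y, z) \<in> {(x, y). x \<in> S \<and> y \<in> S \<and> y < x} \<longrightarrow> y \<notin> Q"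
    proof (cases "Q \<inter> S = {}")
      case True
      with \<open>x \<in> Q\<close> show ?thesis by auto
    next
      case False
      then obtain m where "m \<in> Q \<inter> S" "\<forall>y\<in>Q \<inter> S. y \<le> m"
        using max by (meson inf_le2)
      then show ?thesis by (auto dest: leD)
    qed
  qed
qed

lemma anti_wo_max: "anti_wo S \<Longrightarrow> S \<noteq> {} \<Longrightarrow> \<exists>m\<in>S. \<forall>y\<in>S. y \<le> m"
  unfolding anti_wo_iff_has_max by (meson order_refl)

lemma anti_wo_subset: "anti_wo S \<Longrightarrow> T \<subseteq> S \<Longrightarrow> anti_wo T"
  unfolding anti_wo_def by (erule wf_subset) blast

lemma anti_wo_Un:
  assumes A: "anti_wo (A::'g::linorder set)" and B: "anti_wo B"
  shows "anti_wo (A \<union> B)"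
  unfolding anti_wo_iff_has_max
proof (intro allI impI)
  fix T assume T: "T \<subseteq> A \<union> B" "T \<noteq> {}"
  consider "T \<subseteq> A" | "T \<subseteq> B" | "T \<inter> A \<noteq> {}" "T \<inter> B \<noteq> {}" using T by blast
  then show "\<exists>m\<in>T. \<forall>y\<in>T. y \<le> m"
  proof cases
    case 1
    show ?thesis by (rule anti_wo_max[OF anti_wo_subset[OF A 1] T(2)])
  next
    case 2
    show ?thesis by (rule anti_wo_max[OF anti_wo_subset[OF B 2] T(2)])
  next
    case 3
    obtain a where a: "a \<in> T \<inter> A" "\<forall>y\<in>T \<inter> A. y \<le> a"
      using anti_wo_max[OF anti_wo_subset[OF A] 3(1)] by blast
    obtain b where b: "b \<in> T \<inter> B" "\<forall>y\<in>T \<inter> B. y \<le> b"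
      using anti_wo_max[OF anti_wo_subset[OF B] 3(2)] by blast
    have "max a b \<in> T" using a(1) b(1) by (simp add: max_def)
    moreover have "\<forall>y\<in>T. y \<le> max a b"
      using a(2) b(2) T(1) by (blast intro: max.coboundedI1 max.coboundedI2)
    ultimately show ?thesis ..
  qed
qed

lemma anti_wo_singleton: "anti_wo {x::'g::linorder}"
  unfolding anti_wo_def by (rule wf_subset[of "{}"]) auto

lemma supp_add: "supp (\<lambda>x. (f::_ \<Rightarrow> 'k::monoid_add) x + g x) \<subseteq> supp f \<union> supp g"
  unfolding supp_def by auto

lemma supp_uminus: "supp (\<lambda>x. - (f::_ \<Rightarrow> 'k::ab_group_add) x) = supp f"
  unfolding supp_def by auto

lemma series_on_zero: "(\<lambda>_. 0) \<in> series_on S"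
  unfolding series_on_def supp_def anti_wo_def by auto

lemma series_on_add:
  "(f::_ \<Rightarrow> 'k::monoid_add) \<in> series_on S \<Longrightarrow> g \<in> series_on S \<Longrightarrow> (\<lambda>x. f x + g x) \<in> series_on S"
  unfolding series_on_def using supp_add[of f g] anti_wo_Un anti_wo_subset by blast

lemma series_on_uminus:
  "f \<in> series_on S \<Longrightarrow> (\<lambda>x. - (f::_ \<Rightarrow> 'k::ab_group_add) x) \<in> series_on S"
  unfolding series_on_def using supp_uminus[of f] by auto

lemma series_on_mono: "f \<in> series_on S \<Longrightarrow> S \<subseteq> S' \<Longrightarrow> f \<in> series_on S'"
  unfolding series_on_def by blast

lemma series_on_leading:
  assumes "f \<in> series_on S" "f \<noteq> (\<lambda>_. 0)"
  obtains m where "m \<in> supp f" "\<forall>y\<in>supp f. y \<le> m"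
proof -
  have "supp f \<noteq> {}" using assms(2) unfolding supp_def by auto
  then show ?thesis using assms(1) anti_wo_max that unfolding series_on_def by blast
qed

lemma sval_eq: "M \<in> supp f \<Longrightarrow> \<forall>z\<in>supp f. z \<le> M \<Longrightarrow> sval f = M"
  unfolding sval_def by (rule Greatest_equality) auto

lemma sless_by_common_bound:
  fixes f g :: "'g::linorder \<Rightarrow> 'k::linordered_field"
  assumes "\<forall>z\<in>supp f. z \<le> M" "\<forall>z\<in>supp g. z \<le> M" "f M \<noteq> g M"
  shows "sless f g \<longleftrightarrow> f M < g M"
proof -
  define D where "D = (\<lambda>x. g x - f x)"
  have M: "M \<in> supp D" using assms(3) by (simp add: D_def supp_def)
  moreover have "supp D \<subseteq> supp f \<union> supp g" by (auto simp: D_def supp_def)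
  then have "\<forall>z\<in>supp D. z \<le> M" using assms(1,2) by blast
  ultimately have "sval D = M" by (rule sval_eq)
  with M show ?thesis by (auto simp: sless_def spos_def D_def)
qed

lemma sabs_leading:
  fixes f :: "'g::linorder \<Rightarrow> 'k::linordered_field"
  assumes "m \<in> supp f" "\<forall>y\<in>supp f. y \<le> m"
  shows "sabs f m > 0" "supp (sabs f) = supp f"
proof -
  have "sval f = m" using assms by (rule sval_eq)
  then show "sabs f m > 0" using assms(1) by (auto simp: sabs_def spos_def supp_def)
  show "supp (sabs f) = supp f" using supp_uminus[of f] by (simp add: sabs_def)
qed

definition monomial :: "'g \<Rightarrow> 'g \<Rightarrow> 'k::zero_neq_one" where
  "monomial x = (\<lambda>z. if z = x then 1 else 0)"

lemma supp_monomial: "supp (monomial x) = {x}"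
  by (simp add: monomial_def supp_def)

lemma monomial_nonzero: "monomial x \<noteq> (\<lambda>_. 0)"
  by (metis monomial_def one_neq_zero)

lemma monomial_in_series_on: "x \<in> S \<Longrightarrow> monomial x \<in> series_on S"
  by (simp add: series_on_def supp_monomial anti_wo_singleton)

lemma sabs_monomial: "sabs (monomial x :: 'g::linorder \<Rightarrow> 'k::linordered_field) = monomial x"
proof -
  have "sval (monomial x :: 'g \<Rightarrow> 'k) = x" by (rule sval_eq) (simp_all add: supp_monomial)
  then have "spos (monomial x :: 'g \<Rightarrow> 'k)" unfolding spos_def supp_monomial by (simp add: monomial_def)
  then show ?thesis by (simp add: sabs_def)
qed

lemma add_subgroup_zero: "add_subgroup A \<Longrightarrow> 0 \<in> A"
  and add_subgroup_add: "add_subgroup A \<Longrightarrow> a \<in> A \<Longrightarrow> b \<in> A \<Longrightarrow> a + b \<in> A"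
  and add_subgroup_uminus: "add_subgroup A \<Longrightarrow> a \<in> A \<Longrightarrow> - a \<in> A"
  unfolding add_subgroup_def by blast+

lemma add_subgroup_diff: "add_subgroup A \<Longrightarrow> a \<in> A \<Longrightarrow> b \<in> A \<Longrightarrow> a - b \<in> A"
  by (metis add_subgroup_add add_subgroup_uminus diff_conv_add_uminus)

lemma add_subgroup_set_plus:
  assumes A: "add_subgroup (A::'g::ab_group_add set)" and B: "add_subgroup B"
  shows "add_subgroup (set_plus A B)"
  unfolding add_subgroup_def set_plus_def
proof (intro conjI ballI)
  have "(0::'g) = 0 + 0" by simp
  then show "0 \<in> {a + b |a b. a \<in> A \<and> b \<in> B}"
    using add_subgroup_zero[OF A] add_subgroup_zero[OF B] by blast
next
  fix x y assume "x \<in> {a + b |a b. a \<in> A \<and> b \<in> B}" "y \<in> {a + b |a b. a \<in> A \<and> b \<in> B}"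
  then obtain a a' b b' where "x = a + b" "y = a' + b'" "a \<in> A" "a' \<in> A" "b \<in> B" "b' \<in> B" by blast
  moreover have "a + b + (a' + b') = (a + a') + (b + b')" by (simp add: algebra_simps)
  ultimately show "x + y \<in> {a + b |a b. a \<in> A \<and> b \<in> B}" using A B add_subgroup_add by fastforce
next
  fix x assume "x \<in> {a + b |a b. a \<in> A \<and> b \<in> B}"
  then obtain a b where "x = a + b" "a \<in> A" "b \<in> B" by blast
  moreover have "- (a + b) = - a + - b" by simp
  ultimately show "- x \<in> {a + b |a b. a \<in> A \<and> b \<in> B}" using A B add_subgroup_uminus by fastforce
qed

lemma set_plus_subset_left:
  fixes A B :: "'g::monoid_add set"
  assumes "0 \<in> B" shows "A \<subseteq> set_plus A B"
proof
  fix a assume "a \<in> A"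
  moreover have "a = a + 0" by simp
  ultimately show "a \<in> set_plus A B" using assms unfolding set_plus_def by blast
qed

lemma set_plus_subset_right:
  fixes A B :: "'g::monoid_add set"
  assumes "0 \<in> A" shows "B \<subseteq> set_plus A B"
proof
  fix b assume "b \<in> B"
  moreover have "b = 0 + b" by simp
  ultimately show "b \<in> set_plus A B" using assms unfolding set_plus_def by blast
qed

locale exp_tower =
  fixes G :: "'g::linordered_ab_group_add set" and l Ls :: "'g \<Rightarrow> 'g \<Rightarrow> 'k::linordered_field"
    and Gs :: "nat \<Rightarrow> 'g set"
  assumes tower: "is_exp_tower G l Gs Ls"
begin

lemma Gs_subgroup: "add_subgroup (Gs n)"
  and Gs_mono: "Gs n \<subseteq> Gs (Suc n)"
  and Ls_bij: "bij_betw Ls (Gs (Suc n)) (series_on {h \<in> Gs n. 0 < h})"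
  and Ls_add: "g \<in> Gs (Suc n) \<Longrightarrow> h \<in> Gs (Suc n) \<Longrightarrow> Ls (g + h) = (\<lambda>x. Ls g x + Ls h x)"
  and Ls_less_iff: "g \<in> Gs (Suc n) \<Longrightarrow> h \<in> Gs (Suc n) \<Longrightarrow> g < h \<longleftrightarrow> sless (Ls g) (Ls h)"
  using tower unfolding is_exp_tower_def by blast+

lemma Ls_zero: "Ls 0 = (\<lambda>_. 0)"
proof -
  have "Ls (0 + 0) = (\<lambda>x. Ls 0 x + Ls 0 x)"
    using Ls_add[of 0 0] add_subgroup_zero[OF Gs_subgroup] by blast
  then show ?thesis by (metis add.right_neutral add_left_imp_eq)
qed

lemma Ls_uminus:
  assumes g: "g \<in> Gs (Suc n)"
  shows "Ls (- g) = (\<lambda>x. - Ls g x)"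
proof -
  have "- g \<in> Gs (Suc n)" using g add_subgroup_uminus[OF Gs_subgroup] by blast
  then have "(\<lambda>x. Ls g x + Ls (- g) x) = (\<lambda>_. 0)" using Ls_add[OF g] Ls_zero by fastforce
  then show ?thesis by (metis add_eq_0_iff)
qed

lemma Ls_inj: "g \<in> Gs (Suc n) \<Longrightarrow> h \<in> Gs (Suc n) \<Longrightarrow> Ls g = Ls h \<Longrightarrow> g = h"
  using Ls_bij unfolding bij_betw_def inj_on_def by blast

lemma Ls_in_series_on: "g \<in> Gs (Suc n) \<Longrightarrow> Ls g \<in> series_on {h \<in> Gs n. 0 < h}"
  using Ls_bij unfolding bij_betw_def by blast

lemma Ls_surj:
  assumes "f \<in> series_on {h \<in> Gs n. 0 < h}"
  obtains g where "g \<in> Gs (Suc n)" "Ls g = f"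
  using assms Ls_bij[of n] unfolding bij_betw_def by (metis imageE)

end

definition growth_over ::
  "('g \<Rightarrow> 'g \<Rightarrow> 'k::linordered_field) \<Rightarrow> 'g::linordered_ab_group_add set \<Rightarrow> 'g set \<Rightarrow> bool" where
  "growth_over Ls B A \<longleftrightarrow>
     (\<forall>h\<in>B. \<forall>f\<in>series_on (above B A). f \<noteq> (\<lambda>_. 0) \<longrightarrow> sless (Log_mono Ls h) (sabs f))"

locale growth_step = exp_tower G l Ls Gs
  for G :: "'g::linordered_ab_group_add set" and l Ls :: "'g \<Rightarrow> 'g \<Rightarrow> 'k::linordered_field"
    and Gs :: "nat \<Rightarrow> 'g set" +
  fixes A B :: "'g set" and n :: nat
  assumes B_subgroup: "add_subgroup B"
    and B_in_Gs: "B \<subseteq> Gs n"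
    and zero_in_A: "0 \<in> A"
    and above_nonempty: "above B A \<noteq> {}"
    and growth: "growth_over Ls B A"
begin

abbreviation Exps :: "'g set" where
  "Exps \<equiv> Exp_set Gs Ls n (series_on (above B A))"

lemma above_positive: "above B A \<subseteq> {h \<in> Gs n. 0 < h}"
  using B_in_Gs zero_in_A unfolding above_def by auto

lemma B_in_Gs_Suc: "B \<subseteq> Gs (Suc n)"
  using B_in_Gs Gs_mono by blast

lemma Exps_in_Gs: "Exps \<subseteq> Gs (Suc n)"
  unfolding Exp_set_def by auto

lemma Exps_subgroup: "add_subgroup Exps"
  unfolding add_subgroup_def Exp_set_def
  using Ls_zero Ls_add Ls_uminus series_on_zero series_on_add series_on_uminus
    add_subgroup_zero[OF Gs_subgroup] add_subgroup_add[OF Gs_subgroup]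
    add_subgroup_uminus[OF Gs_subgroup]
  by auto

lemma growth_less:
  assumes "h \<in> B" "f \<in> series_on (above B A)" "f \<noteq> (\<lambda>_. 0)"
  shows "sless (Ls h) (sabs f)"
  using growth assms unfolding growth_over_def Log_mono_def by blast

(* The heart of the argument: every nonzero e in Exps is infinitely large over B,
  i.e. B < |e| = max e (-e).  Indeed Log x < |Log e| for x in B by growth, and Log is an
  order isomorphism on Gs (Suc n). *)
lemma Exps_dominate:
  assumes e: "e \<in> Exps" "e \<noteq> 0" and x: "x \<in> B"
  shows "x < max e (- e)"
proof -
  have eG: "e \<in> Gs (Suc n)" and eS: "Ls e \<in> series_on (above B A)"
    using e unfolding Exp_set_def by auto
  have "Ls e \<noteq> (\<lambda>_. 0)"
    using e(2) Ls_inj[OF eG add_subgroup_zero[OF Gs_subgroup]] Ls_zero by auto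
  then have less: "sless (Ls x) (sabs (Ls e))" using growth_less[OF x eS] by blast
  have xG: "x \<in> Gs (Suc n)" using x B_in_Gs_Suc by blast
  show ?thesis
  proof (cases "spos (Ls e)")
    case True
    then have "x < e" using less Ls_less_iff[OF xG eG] by (simp add: sabs_def)
    then show ?thesis by (simp add: less_max_iff_disj)
  next
    case False
    have "- e \<in> Gs (Suc n)" using eG add_subgroup_uminus[OF Gs_subgroup] by blast
    then have "x < - e" using False less Ls_less_iff[OF xG] Ls_uminus[OF eG] by (simp add: sabs_def)
    then show ?thesis by (simp add: less_max_iff_disj)
  qed
qed

(* Consequences of dominance: the sum B + Exps is direct, B is convex in it, and
  B + Exps properly extends B (witnessed by |Exp t^x| for some x in B^{>A}). *)
lemma B_Int_Exps: "B \<inter> Exps = {0}"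
proof -
  have "x = 0" if "x \<in> B" "x \<in> Exps" for x
  proof (rule ccontr)
    assume "x \<noteq> 0"
    have "max x (- x) \<in> B" using that(1) add_subgroup_uminus[OF B_subgroup] by (simp add: max_def)
    then show False using Exps_dominate[OF that(2) \<open>x \<noteq> 0\<close>] by blast
  qed
  then show ?thesis using add_subgroup_zero[OF B_subgroup] add_subgroup_zero[OF Exps_subgroup] by blast
qed

lemma B_convex: "convex_in B (set_plus B Exps)"
  unfolding convex_in_def
proof (intro ballI impI)
  fix a b c assume ab: "a \<in> B" "b \<in> B" and "c \<in> set_plus B Exps" and between: "a \<le> c \<and> c \<le> b"
  then obtain h e where c: "c = h + e" "h \<in> B" "e \<in> Exps" unfolding set_plus_def by blast
  have "e = 0"
  proof (rule ccontr)
    assume "e \<noteq> 0"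
    have "max (b - h) (h - a) \<in> B"
      using ab c add_subgroup_diff[OF B_subgroup] by (simp add: max_def)
    moreover have "max e (- e) \<le> max (b - h) (h - a)"
      using between c by (auto simp: algebra_simps intro: max.coboundedI1 max.coboundedI2)
    ultimately show False using Exps_dominate[OF c(3) \<open>e \<noteq> 0\<close>] by (meson leD)
  qed
  then show "c \<in> B" using c by simp
qed

lemma B_sum_subgroup: "add_subgroup (set_plus B Exps)"
  using add_subgroup_set_plus[OF B_subgroup Exps_subgroup] .

lemma B_sum_in_Gs: "set_plus B Exps \<subseteq> Gs (Suc n)"
  using B_in_Gs_Suc Exps_in_Gs add_subgroup_add[OF Gs_subgroup] unfolding set_plus_def by blast

lemma above_sum_nonempty: "above (set_plus B Exps) B \<noteq> {}"
proof -
  obtain x where x: "x \<in> above B A" using above_nonempty by blast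
  have mono: "(monomial x :: 'g \<Rightarrow> 'k) \<in> series_on (above B A)"
    using x by (rule monomial_in_series_on)
  then have "(monomial x :: 'g \<Rightarrow> 'k) \<in> series_on {h \<in> Gs n. 0 < h}"
    using above_positive by (rule series_on_mono)
  then obtain e where eG: "e \<in> Gs (Suc n)" and Le: "Ls e = monomial x" by (rule Ls_surj)
  have eE: "e \<in> Exps" using eG Le mono unfolding Exp_set_def by simp
  have "Ls e \<noteq> (\<lambda>_. 0)" using Le monomial_nonzero by simp
  then have "e \<noteq> 0" using Ls_zero by auto
  then have dom: "\<forall>y\<in>B. y < max e (- e)" using Exps_dominate[OF eE] by blast
  have "max e (- e) \<in> Exps" using eE add_subgroup_uminus[OF Exps_subgroup] by (simp add: max_def)
  then have "max e (- e) \<in> set_plus B Exps"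
    using set_plus_subset_right[OF add_subgroup_zero[OF B_subgroup]] by blast
  with dom show ?thesis unfolding above_def by blast
qed

lemma B_psubset_sum: "B \<subset> set_plus B Exps"
proof -
  have "B \<subseteq> set_plus B Exps"
    using set_plus_subset_left[OF add_subgroup_zero[OF Exps_subgroup]] .
  moreover obtain y where "y \<in> above (set_plus B Exps) B" using above_sum_nonempty by blast
  then have "y \<in> set_plus B Exps" "y \<notin> B" unfolding above_def by auto
  ultimately show ?thesis by blast
qed

(* Growth bounds the supports of logarithms of B: applying it to t^x and to h, -h
  gives |Log h| < t^x, so supp (Log h) lies below every x in B^{>A}. *)
lemma log_support_below:
  assumes h: "h \<in> B" and x: "x \<in> above B A"
  shows "\<forall>y\<in>supp (Ls h). y \<le> x"
proof (rule ccontr)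
  assume "\<not> ?thesis"
  then obtain y where y: "y \<in> supp (Ls h)" "x < y" by (meson not_le)
  have hG: "h \<in> Gs (Suc n)" using h B_in_Gs_Suc by blast
  have "anti_wo (supp (Ls h))" using Ls_in_series_on[OF hG] unfolding series_on_def by blast
  then obtain M where M: "M \<in> supp (Ls h)" "\<forall>z\<in>supp (Ls h). z \<le> M"
    using anti_wo_max y(1) by blast
  have xM: "x < M" using M(2) y by fastforce
  have bound_mono: "\<forall>z\<in>supp (monomial x :: 'g \<Rightarrow> 'k). z \<le> M"
    using xM by (simp add: supp_monomial)
  have mono: "(monomial x :: 'g \<Rightarrow> 'k) \<in> series_on (above B A)"
    using x by (rule monomial_in_series_on)
  have "- h \<in> B" using h add_subgroup_uminus[OF B_subgroup] by blast
  have less_pos: "sless (Ls h) (monomial x)" and less_neg: "sless (Ls (- h)) (monomial x)"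
    using growth_less[OF h mono monomial_nonzero] growth_less[OF \<open>- h \<in> B\<close> mono monomial_nonzero]
    by (simp_all add: sabs_monomial)
  have at_M: "Ls h M \<noteq> 0" "monomial x M = (0::'k)"
    using M(1) xM by (auto simp: supp_def monomial_def)
  have neg_bound: "\<forall>z\<in>supp (Ls (- h)). z \<le> M"
    using M(2) by (simp add: Ls_uminus[OF hG] supp_uminus)
  have "Ls h M < 0"
    using less_pos sless_by_common_bound[OF M(2) bound_mono] at_M by simp
  moreover have "Ls (- h) M < 0"
    using less_neg sless_by_common_bound[OF neg_bound bound_mono] at_M by (simp add: Ls_uminus[OF hG])
  ultimately show False by (simp add: Ls_uminus[OF hG])
qed

(* For h = h0 + e, the support of
  Log h0 lies below B^{>A} and that of Log e inside B, so Log h vanishes at and above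
  the leading exponent of any nonzero f with support above B. *)
lemma growth_over_sum: "growth_over Ls (set_plus B Exps) B"
  unfolding growth_over_def Log_mono_def
proof (intro ballI impI)
  fix h and f :: "'g \<Rightarrow> 'k"
  assume "h \<in> set_plus B Exps" and f: "f \<in> series_on (above (set_plus B Exps) B)" "f \<noteq> (\<lambda>_. 0)"
  then obtain h0 e where he: "h = h0 + e" "h0 \<in> B" "e \<in> Exps" unfolding set_plus_def by blast
  obtain m where m: "m \<in> supp f" "\<forall>y\<in>supp f. y \<le> m" using series_on_leading[OF f] .
  have m_above: "\<forall>b\<in>B. b < m" using m(1) f(1) unfolding series_on_def above_def by blast
  obtain x where x: "x \<in> above B A" using above_nonempty by blast
  have "h0 \<in> Gs (Suc n)" "e \<in> Gs (Suc n)" using he B_in_Gs_Suc Exps_in_Gs by blast+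
  then have "Ls h = (\<lambda>z. Ls h0 z + Ls e z)" using Ls_add he(1) by simp
  then have "supp (Ls h) \<subseteq> supp (Ls h0) \<union> supp (Ls e)" using supp_add[of "Ls h0" "Ls e"] by simp
  moreover have "x < m" using x m_above unfolding above_def by blast
  then have "\<forall>y\<in>supp (Ls h0). y < m"
    using log_support_below[OF he(2) x] by (meson le_less_trans)
  moreover have "\<forall>y\<in>supp (Ls e). y < m"
    using he(3) m_above unfolding Exp_set_def series_on_def above_def by blast
  ultimately have below: "\<forall>y\<in>supp (Ls h). y < m" by blast
  then have "Ls h m = 0" "\<forall>y\<in>supp (Ls h). y \<le> m" by (auto simp: supp_def)
  moreover have "sabs f m > 0" "\<forall>y\<in>supp (sabs f). y \<le> m" using sabs_leading[OF m] m(2) by auto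
  ultimately show "sless (Ls h) (sabs f)" using sless_by_common_bound[of "Ls h" m "sabs f"] by simp
qed

lemma antilex_sum: "antilex_product (set_plus B Exps) B Exps"
  unfolding antilex_product_def using B_subgroup Exps_subgroup B_Int_Exps B_convex by blast

lemma next_stage: "growth_step G l Ls Gs B (set_plus B Exps) (Suc n)"
proof unfold_locales
  show "add_subgroup (set_plus B Exps)" by (rule B_sum_subgroup)
  show "set_plus B Exps \<subseteq> Gs (Suc n)" by (rule B_sum_in_Gs)
  show "0 \<in> B" by (rule add_subgroup_zero[OF B_subgroup])
  show "above (set_plus B Exps) B \<noteq> {}" by (rule above_sum_nonempty)
  show "growth_over Ls (set_plus B Exps) B" by (rule growth_over_sum)
qed

end

lemma growth_axiom_stage:
  assumes tower: "is_exp_tower G l Gs Ls"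
    and H: "add_subgroup H" "H \<subseteq> G" "H \<noteq> {0}" and growth: "growth_axiom Ls H"
  shows "growth_step G l Ls Gs {0} H 0"
proof -
  have positive: "above H {0} = {x \<in> H. 0 < x}" unfolding above_def by auto
  obtain x where x: "x \<in> H" "x \<noteq> 0" using H(1,3) add_subgroup_zero by blast
  then have "x \<in> above H {0} \<or> - x \<in> above H {0}"
    using add_subgroup_uminus[OF H(1)] positive by (auto simp: neq_iff)
  then have "above H {0} \<noteq> {}" by blast
  moreover have "Gs 0 = G" using tower unfolding is_exp_tower_def by blast
  moreover have "growth_over Ls H {0}"
    using growth unfolding growth_over_def growth_axiom_def positive .
  ultimately show ?thesis
    using tower H by unfold_locales auto
qed

theorem proposition8:
  fixes lg :: "'k::linordered_field \<Rightarrow> 'k"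
    and G H :: "'g::linordered_ab_group_add set"
    and l Ls :: "'g \<Rightarrow> 'g \<Rightarrow> 'k"
    and Gs :: "nat \<Rightarrow> 'g set"
  assumes "is_log lg"
    and "add_subgroup G"
    and "is_prelog_section G l"
    and "is_exp_tower G l Gs Ls"
    and "add_subgroup H" and "H \<subseteq> G" and "H \<noteq> {0}"
    and "growth_axiom Ls H"
  shows "\<forall>n. add_subgroup (Htow Gs Ls H (Suc n))
           \<and> Htow Gs Ls H (Suc n) \<subset> Htow Gs Ls H (Suc (Suc n))
           \<and> add_subgroup (Htow Gs Ls H (Suc (Suc n)))
           \<and> convex_in (Htow Gs Ls H (Suc n)) (Htow Gs Ls H (Suc (Suc n)))
           \<and> antilex_product (Htow Gs Ls H (Suc (Suc n))) (Htow Gs Ls H (Suc n))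
               (Exp_set Gs Ls n (series_on (above (Htow Gs Ls H (Suc n)) (Htow Gs Ls H n))))
           \<and> (\<forall>h\<in>Htow Gs Ls H (Suc (Suc n)).
                 \<forall>f\<in>series_on (above (Htow Gs Ls H (Suc (Suc n))) (Htow Gs Ls H (Suc n))).
                   f \<noteq> (\<lambda>_. 0) \<longrightarrow> sless (Log_mono Ls h) (sabs f))"
proof
  fix n
  let ?H = "Htow Gs Ls H"
  have stage: "growth_step G l Ls Gs (?H m) (?H (Suc m)) m" for m
  proof (induction m)
    case 0
    show ?case using growth_axiom_stage[OF assms(4-8)] by simp
  next
    case (Suc m)
    show ?case using growth_step.next_stage[OF Suc.IH] by simp
  qed
  interpret growth_step G l Ls Gs "?H n" "?H (Suc n)" n by (rule stage)
  have "?H (Suc (Suc n)) = set_plus (?H (Suc n)) Exps" by simp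
  then show "add_subgroup (?H (Suc n)) \<and> ?H (Suc n) \<subset> ?H (Suc (Suc n))
      \<and> add_subgroup (?H (Suc (Suc n))) \<and> convex_in (?H (Suc n)) (?H (Suc (Suc n)))
      \<and> antilex_product (?H (Suc (Suc n))) (?H (Suc n)) Exps
      \<and> (\<forall>h\<in>?H (Suc (Suc n)). \<forall>f\<in>series_on (above (?H (Suc (Suc n))) (?H (Suc n))).
            f \<noteq> (\<lambda>_. 0) \<longrightarrow> sless (Log_mono Ls h) (sabs f))"
    using B_subgroup B_psubset_sum B_sum_subgroup B_convex antilex_sum growth_over_sum
    unfolding growth_over_def by simp
qed

end
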